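(* Let $f:\mathbb{R}^d\to\mathbb{R}$ be $\mu$-strongly convex and $L$-smooth, with condition number $\kappa=L/\mu$, and let its unique minimizer $x^\star$ satisfy $\|x^\star\|\le r$. Consider SGD iterates $x^{(k+1)}=x^{(k)}-\eta\,\nabla f(x^{(k)};\xi^{(k)})$ with learning rate $\eta\in(0,1/L]$, where the stochastic gradient satisfies $\mathbb{E}[\nabla f(x^{(k)};\xi^{(k)})\mid x^{(k)}]=\nabla f(x^{(k)})$ and $\mathbb{E}\big[\|\nabla f(x^{(k)};\xi^{(k)})-\nabla f(x^{(k)})\|^2\mid x^{(k)}\big]\le\sigma^2$. Define $$R=r+\sqrt{\max(3,\kappa)}\,\sqrt{2r^2+\frac{\sigma^2}{L^2}}.$$ Then for every $k$, if $\|x^{(k)}\|\le R$, then $\mathbb{E}\big[\|x^{(k+1)}\|^2\,\big|\,x^{(k)}\big]\le R^2$; i.e. SGD is stable with respect to the second moment with radius $R$.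
   Context: $\|\cdot\|$ denotes the Euclidean norm. Stability with respect to the second moment: there exist a finite constant $R$ and an index $k_0$ such that for all $k\ge k_0$, whenever $\|x^{(k)}\|^2\le R^2$, one has $\mathbb{E}[\|x^{(k+1)}\|^2\mid x^{(k)}]\le R^2$. *)

theory Defs
  imports "HOL-Probability.Probability"
begin

definition strongly_convex :: "real \<Rightarrow> ('a::real_inner \<Rightarrow> real) \<Rightarrow> bool" where
  "strongly_convex \<mu> f \<longleftrightarrow> convex_on UNIV (\<lambda>x. f x - \<mu> / 2 * (norm x)\<^sup>2)"

definition L_smooth :: "real \<Rightarrow> ('a::real_inner \<Rightarrow> real) \<Rightarrow> ('a \<Rightarrow> 'a) \<Rightarrow> bool" where
  "L_smooth L f grad \<longleftrightarrow>
     (\<forall>x. (f has_derivative (\<lambda>h. grad x \<bullet> h)) (at x)) \<and>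
     (\<forall>x y. norm (grad x - grad y) \<le> L * norm (x - y))"

end

theory Submission
  imports Defs
begin

text \<open>The function \<open>h = f - \<mu>/2 \<parallel>\<cdot>\<parallel>\<^sup>2\<close> is convex and \<open>(L - \<mu>)\<close>-smooth, so its gradient
  \<open>grad - \<mu> id\<close> is cocoercive. Comparing x with the minimizer \<open>x\<^sup>*\<close>, where grad vanishes, shows
  that the full step \<open>x - grad x / L\<close> is the convex combination \<open>(1 - \<mu>/L) x + (\<mu>/L) x\<^sup>*\<close>
  moved by a vector whose effect on the squared norm is at most \<open>\<parallel>x\<^sup>*\<parallel>\<^sup>2\<close>; for \<open>\<parallel>x\<parallel> \<le> R\<close> this
  leaves room for the noise term \<open>\<sigma>\<^sup>2/L\<^sup>2\<close> inside the ball of radius R (only \<open>max 3 \<kappa> \<ge> \<kappa>\<close> is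
  used). As \<open>\<eta> \<mapsto> \<parallel>x - \<eta> grad x\<parallel>\<^sup>2 + \<eta>\<^sup>2 \<sigma>\<^sup>2\<close> is a convex quadratic, the bounds at \<open>\<eta> = 0\<close>
  and \<open>\<eta> = 1/L\<close> give it on \<open>[0, 1/L]\<close>, and by unbiasedness this quantity dominates the second
  moment of the stochastic step.\<close>

lemma has_real_derivative_along_line:
  fixes f :: "'a::real_inner \<Rightarrow> real"
  assumes "(f has_derivative (\<lambda>v. G \<bullet> v)) (at (x + t *\<^sub>R d))"
  shows "((\<lambda>t. f (x + t *\<^sub>R d)) has_real_derivative G \<bullet> d) (at t)"
proof -
  have "((\<lambda>t. x + t *\<^sub>R d) has_derivative (\<lambda>s. s *\<^sub>R d)) (at t)"
    by (auto intro!: derivative_eq_intros)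
  from has_derivative_compose[OF this assms]
  have "((\<lambda>t. f (x + t *\<^sub>R d)) has_derivative (\<lambda>s. G \<bullet> (s *\<^sub>R d))) (at t)" .
  moreover have "(\<lambda>s. G \<bullet> (s *\<^sub>R d)) = (*) (G \<bullet> d)"
    by (simp add: fun_eq_iff mult.commute)
  ultimately show ?thesis
    by (simp add: has_field_derivative_def)
qed

lemma convex_on_has_derivative_above_tangent:
  fixes h :: "'a::real_inner \<Rightarrow> real"
  assumes cv: "convex_on UNIV h" and d: "(h has_derivative (\<lambda>v. G \<bullet> v)) (at x)"
  shows "h x + G \<bullet> (y - x) \<le> h y"
proof -
  define \<phi> where "\<phi> t = h (x + t *\<^sub>R (y - x))" for t :: real
  have "convex_on UNIV \<phi>"
  proof (rule convex_onI)
    fix t a b :: real assume t: "0 < t" "t < 1"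
    have "(1 - t) *\<^sub>R (x + a *\<^sub>R (y - x)) + t *\<^sub>R (x + b *\<^sub>R (y - x))
        = x + ((1 - t) * a + t * b) *\<^sub>R (y - x)"
      by (simp add: algebra_simps)
    then show "\<phi> ((1 - t) *\<^sub>R a + t *\<^sub>R b) \<le> (1 - t) * \<phi> a + t * \<phi> b"
      using convex_onD[OF cv, of t "x + a *\<^sub>R (y - x)" "x + b *\<^sub>R (y - x)"] t
      by (simp add: \<phi>_def)
  qed simp
  moreover have "(\<phi> has_real_derivative G \<bullet> (y - x)) (at 0)"
    unfolding \<phi>_def by (rule has_real_derivative_along_line) (simp add: d)
  ultimately have "\<phi> 1 - \<phi> 0 \<ge> G \<bullet> (y - x) * (1 - 0)"
    by (intro convex_on_imp_above_tangent[where A=UNIV]) simp_all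
  then show ?thesis
    by (simp add: \<phi>_def)
qed

text \<open>Along the segment from x to y, \<open>f - tangent - L t\<^sup>2 \<parallel>y - x\<parallel>\<^sup>2 / 2\<close> has nonpositive
  derivative by Lipschitz continuity of grad.\<close>
lemma L_smooth_quadratic_upper_bound:
  fixes f :: "'a::real_inner \<Rightarrow> real"
  assumes "L_smooth L f grad"
  shows "f y \<le> f x + grad x \<bullet> (y - x) + L / 2 * (norm (y - x))\<^sup>2"
proof -
  have d: "\<And>z. (f has_derivative (\<lambda>v. grad z \<bullet> v)) (at z)"
    and lip: "\<And>z w. norm (grad z - grad w) \<le> L * norm (z - w)"
    using assms unfolding L_smooth_def by auto
  define e where "e = y - x"
  define \<psi> where "\<psi> t = f (x + t *\<^sub>R e) - t * (grad x \<bullet> e) - L / 2 * t\<^sup>2 * (norm e)\<^sup>2" for t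
  define \<psi>' where "\<psi>' t = grad (x + t *\<^sub>R e) \<bullet> e - grad x \<bullet> e - L * t * (norm e)\<^sup>2" for t
  have "(\<psi> has_real_derivative \<psi>' t) (at t)" for t
    unfolding \<psi>_def \<psi>'_def
    by (auto intro!: derivative_eq_intros has_real_derivative_along_line d
        simp: algebra_simps power2_eq_square)
  then have "(\<psi> has_derivative (*) (\<psi>' t)) (at t within {0..1})" for t
    using has_derivative_at_withinI has_field_derivative_def by blast
  then obtain \<xi> where \<xi>: "\<xi> \<in> {0..1}" "\<psi> 1 - \<psi> 0 = \<psi>' \<xi> * (1 - 0)"
    using mvt_very_simple[of 0 1 \<psi> "\<lambda>t. (*) (\<psi>' t)"] by auto
  have "grad (x + \<xi> *\<^sub>R e) \<bullet> e - grad x \<bullet> e = (grad (x + \<xi> *\<^sub>R e) - grad x) \<bullet> e"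
    by (simp add: inner_diff_left)
  also have "\<dots> \<le> norm (grad (x + \<xi> *\<^sub>R e) - grad x) * norm e"
    by (rule norm_cauchy_schwarz)
  also have "\<dots> \<le> L * norm (\<xi> *\<^sub>R e) * norm e"
    using lip[of "x + \<xi> *\<^sub>R e" x] by (intro mult_right_mono) auto
  also have "\<dots> = L * \<xi> * (norm e)\<^sup>2"
    using \<xi>(1) by (simp add: power2_eq_square)
  finally have "\<psi> 1 \<le> \<psi> 0"
    using \<xi>(2) by (simp add: \<psi>'_def)
  then show ?thesis
    by (simp add: \<psi>_def e_def)
qed

text \<open>The tangent at a and the quadratic upper bound around b are compared at the point
  \<open>z = b - (G b - G a) / K\<close>, which minimizes their difference.\<close>
lemma convex_quadratic_upper_bound_tangent_gap:
  fixes h :: "'a::real_inner \<Rightarrow> real"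
  assumes cv: "convex_on UNIV h" and d: "\<And>x. (h has_derivative (\<lambda>v. G x \<bullet> v)) (at x)"
    and ub: "\<And>x y. h y \<le> h x + G x \<bullet> (y - x) + K / 2 * (norm (y - x))\<^sup>2"
    and K: "K > 0"
  shows "h a + G a \<bullet> (b - a) + (norm (G b - G a))\<^sup>2 / (2 * K) \<le> h b"
proof -
  define D where "D = G b - G a"
  define z where "z = b - (1 / K) *\<^sub>R D"
  have "h a + G a \<bullet> (z - a) \<le> h z"
    by (rule convex_on_has_derivative_above_tangent[OF cv d])
  moreover have "h z \<le> h b + G b \<bullet> (z - b) + K / 2 * (norm (z - b))\<^sup>2"
    by (rule ub)
  moreover have "G a \<bullet> (z - a) = G a \<bullet> (b - a) + G a \<bullet> (z - b)"
    by (simp add: inner_diff_right)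
  moreover have "G b \<bullet> (z - b) - G a \<bullet> (z - b) = - (norm D)\<^sup>2 / K"
    by (simp add: z_def D_def inner_diff_left power2_norm_eq_inner diff_divide_distrib)
  moreover have "K / 2 * (norm (z - b))\<^sup>2 = (norm D)\<^sup>2 / (2 * K)"
    using K by (simp add: z_def power2_eq_square)
  ultimately show ?thesis
    by (simp add: D_def)
qed

lemma convex_quadratic_upper_bound_cocoercive_pos:
  fixes h :: "'a::real_inner \<Rightarrow> real"
  assumes cv: "convex_on UNIV h" and d: "\<And>x. (h has_derivative (\<lambda>v. G x \<bullet> v)) (at x)"
    and ub: "\<And>x y. h y \<le> h x + G x \<bullet> (y - x) + K / 2 * (norm (y - x))\<^sup>2"
    and K: "K > 0"
  shows "(norm (G x - G y))\<^sup>2 \<le> K * ((G x - G y) \<bullet> (x - y))"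
proof -
  note gap = convex_quadratic_upper_bound_tangent_gap[OF cv d ub K]
  have "G x \<bullet> (y - x) + G y \<bullet> (x - y) = - ((G x - G y) \<bullet> (x - y))"
    by (simp add: algebra_simps)
  with gap[of x y] gap[of y x] have "(norm (G x - G y))\<^sup>2 / K \<le> (G x - G y) \<bullet> (x - y)"
    by (simp add: norm_minus_commute)
  then show ?thesis
    using K by (simp add: pos_divide_le_eq mult.commute)
qed

text \<open>The case \<open>K = 0\<close> follows by letting \<open>K'\<close> decrease to K, since the upper bound persists for every \<open>K' > K\<close>.\<close>
lemma convex_quadratic_upper_bound_cocoercive:
  fixes h :: "'a::real_inner \<Rightarrow> real"
  assumes cv: "convex_on UNIV h" and d: "\<And>x. (h has_derivative (\<lambda>v. G x \<bullet> v)) (at x)"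
    and ub: "\<And>x y. h y \<le> h x + G x \<bullet> (y - x) + K / 2 * (norm (y - x))\<^sup>2"
    and K: "K \<ge> 0"
  shows "(norm (G x - G y))\<^sup>2 \<le> K * ((G x - G y) \<bullet> (x - y))"
proof -
  let ?n = "(norm (G x - G y))\<^sup>2" and ?c = "(G x - G y) \<bullet> (x - y)"
  have larger: "?n \<le> K' * ?c" if K': "K' > K" for K'
  proof -
    have "h b \<le> h a + G a \<bullet> (b - a) + K' / 2 * (norm (b - a))\<^sup>2" for a b
    proof -
      have "K / 2 * (norm (b - a))\<^sup>2 \<le> K' / 2 * (norm (b - a))\<^sup>2"
        using K' by (intro mult_right_mono) auto
      then show ?thesis
        using ub[where x=a and y=b] by linarith
    qed
    moreover have "K' > 0"
      using K K' by simp
    ultimately show ?thesis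
      by (rule convex_quadratic_upper_bound_cocoercive_pos[OF cv d])
  qed
  have "0 \<le> (K + 1) * ?c"
    by (rule order_trans[OF zero_le_power2 larger]) simp
  then have c: "0 \<le> ?c"
    using K by (simp add: zero_le_mult_iff)
  show ?thesis
  proof (rule field_le_epsilon)
    fix e :: real assume e: "0 < e"
    have "?n \<le> (K + e / (?c + 1)) * ?c"
      using larger e c by simp
    also have "\<dots> = K * ?c + e * (?c / (?c + 1))"
      by (simp add: algebra_simps)
    also have "\<dots> \<le> K * ?c + e * 1"
      using e c by (intro add_left_mono mult_left_mono) auto
    finally show "?n \<le> K * ?c + e"
      by simp
  qed
qed

lemma has_derivative_minimizer_gradient_zero:
  fixes f :: "'a::real_inner \<Rightarrow> real"
  assumes "(f has_derivative (\<lambda>v. G \<bullet> v)) (at x)" and "\<forall>y. f x \<le> f y"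
  shows "G = 0"
proof -
  have "(\<lambda>v. G \<bullet> v) = (\<lambda>v. 0)"
    using assms by (intro has_derivative_local_min) auto
  then have "G \<bullet> G = 0"
    by meson
  then show ?thesis
    by simp
qed

lemma L_smooth_shift_has_derivative:
  fixes f :: "'a::real_inner \<Rightarrow> real"
  assumes "L_smooth L f grad"
  shows "((\<lambda>z. f z - \<mu> / 2 * (norm z)\<^sup>2) has_derivative (\<lambda>v. (grad x - \<mu> *\<^sub>R x) \<bullet> v)) (at x)"
proof -
  have d: "(f has_derivative (\<lambda>v. grad x \<bullet> v)) (at x)"
    using assms unfolding L_smooth_def by blast
  have "((\<lambda>z. f z - \<mu> / 2 * (z \<bullet> z)) has_derivative
          (\<lambda>v. grad x \<bullet> v - \<mu> / 2 * (v \<bullet> x + x \<bullet> v))) (at x)"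
    by (auto intro!: derivative_eq_intros d)
  then show ?thesis
    by (simp add: power2_norm_eq_inner inner_commute algebra_simps)
qed

lemma L_smooth_shift_upper_bound:
  fixes f :: "'a::real_inner \<Rightarrow> real"
  assumes "L_smooth L f grad"
  shows "f y - \<mu> / 2 * (norm y)\<^sup>2
    \<le> f x - \<mu> / 2 * (norm x)\<^sup>2 + (grad x - \<mu> *\<^sub>R x) \<bullet> (y - x) + (L - \<mu>) / 2 * (norm (y - x))\<^sup>2"
proof -
  have "\<mu> / 2 * (norm y)\<^sup>2 = \<mu> / 2 * (norm x)\<^sup>2 + \<mu> * (x \<bullet> (y - x)) + \<mu> / 2 * (norm (y - x))\<^sup>2"
    by (simp add: power2_norm_eq_inner algebra_simps inner_commute)
  moreover have "(grad x - \<mu> *\<^sub>R x) \<bullet> (y - x) = grad x \<bullet> (y - x) - \<mu> * (x \<bullet> (y - x))"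
    by (simp only: inner_diff_left inner_scaleR_left)
  moreover have "(L - \<mu>) / 2 * (norm (y - x))\<^sup>2 = L / 2 * (norm (y - x))\<^sup>2 - \<mu> / 2 * (norm (y - x))\<^sup>2"
    by (simp add: field_simps)
  ultimately show ?thesis
    using L_smooth_quadratic_upper_bound[OF assms, of y x] by linarith
qed

lemma strongly_convex_L_smooth_le:
  fixes f :: "'a::euclidean_space \<Rightarrow> real"
  assumes sc: "strongly_convex \<mu> f" and sm: "L_smooth L f grad"
  shows "\<mu> \<le> L"
proof -
  obtain e :: 'a where e: "e \<in> Basis"
    using nonempty_Basis by blast
  define h where "h z = f z - \<mu> / 2 * (norm z)\<^sup>2" for z
  have "h 0 + (grad 0 - \<mu> *\<^sub>R 0) \<bullet> (e - 0) \<le> h e"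
    using sc L_smooth_shift_has_derivative[OF sm]
    unfolding strongly_convex_def h_def by (rule convex_on_has_derivative_above_tangent)
  with L_smooth_shift_upper_bound[OF sm, where x=0 and y=e and \<mu>=\<mu>] have "0 \<le> (L - \<mu>) / 2 * (norm e)\<^sup>2"
    by (simp add: h_def)
  then show ?thesis
    using e by simp
qed

lemma strongly_convex_L_smooth_cocoercive:
  fixes f :: "'a::real_inner \<Rightarrow> real"
  assumes sc: "strongly_convex \<mu> f" and sm: "L_smooth L f grad" and "\<mu> \<le> L"
  shows "(norm ((grad x - \<mu> *\<^sub>R x) - (grad y - \<mu> *\<^sub>R y)))\<^sup>2
    \<le> (L - \<mu>) * (((grad x - \<mu> *\<^sub>R x) - (grad y - \<mu> *\<^sub>R y)) \<bullet> (x - y))"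
  using sc L_smooth_shift_has_derivative[OF sm] L_smooth_shift_upper_bound[OF sm] \<open>\<mu> \<le> L\<close>
  unfolding strongly_convex_def
  by (intro convex_quadratic_upper_bound_cocoercive[where h="\<lambda>z. f z - \<mu> / 2 * (norm z)\<^sup>2"]) auto

text \<open>With \<open>a = \<mu>/L\<close>, \<open>u = x - x\<^sup>*\<close> and \<open>p = (g - \<mu> u)/L\<close> the step is
  \<open>x - g/L = w - p\<close> for the convex combination \<open>w = (1 - a) x + a x\<^sup>*\<close>, and the hypothesis
  reads \<open>\<parallel>p\<parallel>\<^sup>2 \<le> (1 - a) (u \<bullet> p)\<close>; so \<open>\<parallel>w - p\<parallel>\<^sup>2 \<le> \<parallel>w\<parallel>\<^sup>2 - \<parallel>p\<parallel>\<^sup>2 - 2 (x\<^sup>* \<bullet> p)\<close>.\<close>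
lemma cocoercive_gradient_step_sq_norm_le:
  fixes x xstar g :: "'a::real_inner"
  assumes \<mu>: "0 < \<mu>" "\<mu> \<le> L"
    and coc: "(norm (g - \<mu> *\<^sub>R (x - xstar)))\<^sup>2 \<le> (L - \<mu>) * ((g - \<mu> *\<^sub>R (x - xstar)) \<bullet> (x - xstar))"
  shows "(norm (x - (1 / L) *\<^sub>R g))\<^sup>2 \<le> (norm ((1 - \<mu> / L) *\<^sub>R x + (\<mu> / L) *\<^sub>R xstar))\<^sup>2 + (norm xstar)\<^sup>2"
proof -
  define a where "a = \<mu> / L"
  define u where "u = x - xstar"
  define p where "p = (1 / L) *\<^sub>R (g - \<mu> *\<^sub>R u)"
  define w where "w = (1 - a) *\<^sub>R x + a *\<^sub>R xstar"
  have L: "L > 0"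
    using \<mu> by simp
  have "(norm p)\<^sup>2 = (norm (g - \<mu> *\<^sub>R u))\<^sup>2 / L\<^sup>2"
    using L by (simp add: p_def power_divide)
  also have "\<dots> \<le> (L - \<mu>) * ((g - \<mu> *\<^sub>R u) \<bullet> u) / L\<^sup>2"
    using coc by (simp add: u_def divide_right_mono)
  also have "\<dots> = (1 - a) * (u \<bullet> p)"
  proof -
    have "u \<bullet> p = ((g - \<mu> *\<^sub>R u) \<bullet> u) / L"
      unfolding p_def by (simp only: inner_scaleR_right inner_commute[of u]) simp
    then show ?thesis
      using L by (simp add: a_def field_simps power2_eq_square)
  qed
  finally have key: "(norm p)\<^sup>2 \<le> (1 - a) * (u \<bullet> p)" .
  have "w \<bullet> p = (1 - a) * (u \<bullet> p) + xstar \<bullet> p"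
    by (simp add: w_def u_def algebra_simps)
  then have "(norm (w - p))\<^sup>2 = (norm w)\<^sup>2 - 2 * ((1 - a) * (u \<bullet> p)) - 2 * (xstar \<bullet> p) + (norm p)\<^sup>2"
    by (simp add: power2_norm_eq_inner algebra_simps inner_commute)
  also have "\<dots> \<le> (norm w)\<^sup>2 - (norm p)\<^sup>2 + 2 * (norm xstar * norm p)"
    using key norm_cauchy_schwarz[of "- xstar" p] by simp
  also have "\<dots> \<le> (norm w)\<^sup>2 + (norm xstar)\<^sup>2"
    using sum_squares_bound[of "norm xstar" "norm p"] by (simp add: algebra_simps)
  finally show ?thesis
    using L by (simp add: w_def p_def a_def u_def algebra_simps)
qed

text \<open>With \<open>R = r + s q\<close>, the gain \<open>R\<^sup>2 - (R - a s q)\<^sup>2 = 2 a s q r + a s\<^sup>2 (2 - a) q\<^sup>2\<close>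
  dominates \<open>q\<^sup>2 = 2 r\<^sup>2 + b\<close> because \<open>a s\<^sup>2 \<ge> 1\<close> and \<open>2 - a \<ge> 1\<close>.\<close>
lemma radius_contraction_inequality:
  fixes a r s q b :: real
  assumes a: "0 < a" "a \<le> 1" and nonneg: "0 \<le> r" "0 \<le> s" "0 \<le> q"
    and as2: "1 \<le> a * s\<^sup>2" and q2: "q\<^sup>2 = 2 * r\<^sup>2 + b"
  shows "((1 - a) * (r + s * q) + a * r)\<^sup>2 + r\<^sup>2 + b \<le> (r + s * q)\<^sup>2"
proof -
  have gain: "(r + s * q)\<^sup>2 - ((1 - a) * (r + s * q) + a * r)\<^sup>2
      = 2 * a * s * q * r + (a * s\<^sup>2) * (2 - a) * q\<^sup>2"
    by (simp add: algebra_simps power2_eq_square)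
  have "1 * 1 \<le> (a * s\<^sup>2) * (2 - a)"
    using as2 a by (intro mult_mono) auto
  then have "q\<^sup>2 \<le> (a * s\<^sup>2) * (2 - a) * q\<^sup>2"
    using mult_right_mono[of 1 "(a * s\<^sup>2) * (2 - a)" "q\<^sup>2"] by simp
  moreover have "0 \<le> 2 * a * s * q * r"
    using a nonneg by simp
  ultimately show ?thesis
    using gain q2 zero_le_power2[of r] by linarith
qed

lemma power2_norm_diff:
  fixes a b :: "'a::real_inner"
  shows "(norm (a - b))\<^sup>2 = (norm a)\<^sup>2 - 2 * (a \<bullet> b) + (norm b)\<^sup>2"
  using dot_norm_neg[of a b] by simp

lemma sq_norm_step_le_endpoints:
  fixes x v :: "'a::real_inner"
  assumes c: "0 \<le> c" and \<eta>: "0 \<le> \<eta>" "\<eta> \<le> T"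
    and at_0: "(norm x)\<^sup>2 \<le> B" and at_T: "(norm (x - T *\<^sub>R v))\<^sup>2 + T\<^sup>2 * c \<le> B"
  shows "(norm (x - \<eta> *\<^sub>R v))\<^sup>2 + \<eta>\<^sup>2 * c \<le> B"
proof -
  define \<phi> where "\<phi> e = (norm x)\<^sup>2 - 2 * e * (x \<bullet> v) + e\<^sup>2 * ((norm v)\<^sup>2 + c)" for e
  have \<phi>: "(norm (x - e *\<^sub>R v))\<^sup>2 + e\<^sup>2 * c = \<phi> e" for e
    by (simp add: \<phi>_def power2_norm_diff algebra_simps)
  consider "T = 0" | "T > 0"
    using \<eta> by linarith
  then show ?thesis
  proof cases
    case 1
    then show ?thesis
      using \<eta> at_0 by simp
  next
    case 2
    define t where "t = \<eta> / T"
    have t: "0 \<le> t" "t \<le> 1"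
      using \<eta> 2 by (simp_all add: t_def)
    have "\<phi> \<eta> = (1 - t) * \<phi> 0 + t * \<phi> T - t * (1 - t) * T\<^sup>2 * ((norm v)\<^sup>2 + c)"
      using 2 by (simp add: \<phi>_def t_def field_simps power2_eq_square)
    also have "\<dots> \<le> (1 - t) * \<phi> 0 + t * \<phi> T"
      using t c by simp
    also have "\<dots> \<le> (1 - t) * B + t * B"
      using t at_0 at_T \<phi>[of 0] \<phi>[of T] by (intro add_mono mult_left_mono) auto
    finally show ?thesis
      unfolding \<phi> by (simp add: algebra_simps)
  qed
qed

lemma expectation_sq_norm_step:
  fixes g :: "'b \<Rightarrow> 'a::{real_inner, banach, second_countable_topology}"
  assumes M: "prob_space M" and g: "integrable M g" and mean: "(\<integral>\<omega>. g \<omega> \<partial>M) = v"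
    and var: "integrable M (\<lambda>\<omega>. (norm (g \<omega> - v))\<^sup>2)"
  shows "integrable M (\<lambda>\<omega>. (norm (x - \<eta> *\<^sub>R g \<omega>))\<^sup>2)"
    and "(\<integral>\<omega>. (norm (x - \<eta> *\<^sub>R g \<omega>))\<^sup>2 \<partial>M)
           = (norm (x - \<eta> *\<^sub>R v))\<^sup>2 + \<eta>\<^sup>2 * (\<integral>\<omega>. (norm (g \<omega> - v))\<^sup>2 \<partial>M)"
proof -
  interpret prob_space M
    by (rule M)
  define y where "y = x - \<eta> *\<^sub>R v"
  have expand: "(norm (x - \<eta> *\<^sub>R g \<omega>))\<^sup>2
      = (norm y)\<^sup>2 - 2 * \<eta> * (y \<bullet> (g \<omega> - v)) + \<eta>\<^sup>2 * (norm (g \<omega> - v))\<^sup>2" for \<omega>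
  proof -
    have "x - \<eta> *\<^sub>R g \<omega> = y - \<eta> *\<^sub>R (g \<omega> - v)"
      by (simp add: y_def algebra_simps)
    then show ?thesis
      by (simp only: power2_norm_diff norm_scaleR inner_scaleR_right power_mult_distrib power2_abs)
  qed
  have centered: "integrable M (\<lambda>\<omega>. y \<bullet> (g \<omega> - v))"
    using g by simp
  have "(\<integral>\<omega>. y \<bullet> (g \<omega> - v) \<partial>M) = 0"
    using g mean by (simp add: prob_space)
  with centered var show "integrable M (\<lambda>\<omega>. (norm (x - \<eta> *\<^sub>R g \<omega>))\<^sup>2)"
    and "(\<integral>\<omega>. (norm (x - \<eta> *\<^sub>R g \<omega>))\<^sup>2 \<partial>M)
           = (norm (x - \<eta> *\<^sub>R v))\<^sup>2 + \<eta>\<^sup>2 * (\<integral>\<omega>. (norm (g \<omega> - v))\<^sup>2 \<partial>M)"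
    unfolding expand by (simp_all add: prob_space y_def)
qed

lemma strongly_convex_L_smooth_gradient_step:
  fixes f :: "'a::euclidean_space \<Rightarrow> real"
  assumes \<mu>: "0 < \<mu>" and sc: "strongly_convex \<mu> f" and sm: "L_smooth L f grad"
    and min: "\<forall>y. f xstar \<le> f y"
  shows "(norm (x - (1 / L) *\<^sub>R grad x))\<^sup>2
    \<le> (norm ((1 - \<mu> / L) *\<^sub>R x + (\<mu> / L) *\<^sub>R xstar))\<^sup>2 + (norm xstar)\<^sup>2"
proof -
  have \<mu>L: "\<mu> \<le> L"
    using sc sm by (rule strongly_convex_L_smooth_le)
  have "grad xstar = 0"
    using sm min unfolding L_smooth_def by (blast intro: has_derivative_minimizer_gradient_zero)
  then have "(norm (grad x - \<mu> *\<^sub>R (x - xstar)))\<^sup>2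
      \<le> (L - \<mu>) * ((grad x - \<mu> *\<^sub>R (x - xstar)) \<bullet> (x - xstar))"
    using strongly_convex_L_smooth_cocoercive[OF sc sm \<mu>L, of x xstar] by (simp add: algebra_simps)
  then show ?thesis
    by (rule cocoercive_gradient_step_sq_norm_le[OF \<mu> \<mu>L])
qed

lemma strongly_convex_L_smooth_gradient_step_radius:
  fixes f :: "'a::euclidean_space \<Rightarrow> real"
  assumes \<mu>: "0 < \<mu>" and sc: "strongly_convex \<mu> f" and sm: "L_smooth L f grad"
    and min: "\<forall>y. f xstar \<le> f y" and xstar_r: "norm xstar \<le> r"
    and s: "0 \<le> s" "L / \<mu> \<le> s\<^sup>2" and q: "0 \<le> q" "q\<^sup>2 = 2 * r\<^sup>2 + b"
    and x: "norm x \<le> r + s * q"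
  shows "(norm (x - (1 / L) *\<^sub>R grad x))\<^sup>2 + b \<le> (r + s * q)\<^sup>2"
proof -
  define a where "a = \<mu> / L"
  have \<mu>L: "\<mu> \<le> L"
    using sc sm by (rule strongly_convex_L_smooth_le)
  have r: "0 \<le> r"
    using xstar_r norm_ge_zero order_trans by blast
  have "a * (L / \<mu>) \<le> a * s\<^sup>2"
    using \<mu> \<mu>L s by (intro mult_left_mono) (auto simp: a_def)
  then have a: "0 < a" "a \<le> 1" "1 \<le> a * s\<^sup>2"
    using \<mu> \<mu>L by (auto simp: a_def)
  have "norm ((1 - a) *\<^sub>R x + a *\<^sub>R xstar) \<le> (1 - a) * norm x + a * norm xstar"
    using norm_triangle_ineq[of "(1 - a) *\<^sub>R x" "a *\<^sub>R xstar"] a by simp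
  also have "\<dots> \<le> (1 - a) * (r + s * q) + a * r"
    using a x xstar_r by (intro add_mono mult_left_mono) auto
  finally have "(norm ((1 - a) *\<^sub>R x + a *\<^sub>R xstar))\<^sup>2 + (norm xstar)\<^sup>2
      \<le> ((1 - a) * (r + s * q) + a * r)\<^sup>2 + r\<^sup>2"
    using xstar_r by (intro add_mono power_mono) auto
  with strongly_convex_L_smooth_gradient_step[OF \<mu> sc sm min, of x]
    radius_contraction_inequality[OF a(1,2) r s(1) q(1) a(3) q(2)]
  show ?thesis
    by (simp add: a_def)
qed

theorem theorem2:
  fixes f :: "'a::euclidean_space \<Rightarrow> real" and grad :: "'a \<Rightarrow> 'a"
    and \<mu> L \<eta> \<sigma> r :: real and xstar x :: 'a
    and M :: "'b measure" and g :: "'b \<Rightarrow> 'a"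
  assumes mu_pos: "\<mu> > 0" and L_pos: "L > 0"
    and sc: "strongly_convex \<mu> f"
    and sm: "L_smooth L f grad"
    and xstar_min: "\<forall>y. f xstar \<le> f y"
    and xstar_r: "norm xstar \<le> r"
    and eta: "0 < \<eta>" "\<eta> \<le> 1 / L"
    and M: "prob_space M"
    and g_meas: "g \<in> borel_measurable M"
    and g_int: "integrable M g"
    and unbiased: "(\<integral>\<omega>. g \<omega> \<partial>M) = grad x"
    and var_int: "integrable M (\<lambda>\<omega>. (norm (g \<omega> - grad x))\<^sup>2)"
    and var_bd: "(\<integral>\<omega>. (norm (g \<omega> - grad x))\<^sup>2 \<partial>M) \<le> \<sigma>\<^sup>2"
    and x_R: "norm x \<le> r + sqrt (max 3 (L / \<mu>)) * sqrt (2 * r\<^sup>2 + \<sigma>\<^sup>2 / L\<^sup>2)"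
  shows "integrable M (\<lambda>\<omega>. (norm (x - \<eta> *\<^sub>R g \<omega>))\<^sup>2) \<and>
         (\<integral>\<omega>. (norm (x - \<eta> *\<^sub>R g \<omega>))\<^sup>2 \<partial>M)
           \<le> (r + sqrt (max 3 (L / \<mu>)) * sqrt (2 * r\<^sup>2 + \<sigma>\<^sup>2 / L\<^sup>2))\<^sup>2"
proof -
  define s where "s = sqrt (max 3 (L / \<mu>))"
  define q where "q = sqrt (2 * r\<^sup>2 + \<sigma>\<^sup>2 / L\<^sup>2)"
  define R where "R = r + s * q"
  have xR: "norm x \<le> R"
    using x_R by (simp add: R_def s_def q_def)
  have "0 \<le> s" "L / \<mu> \<le> s\<^sup>2" "0 \<le> q" "q\<^sup>2 = 2 * r\<^sup>2 + \<sigma>\<^sup>2 / L\<^sup>2"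
    by (simp_all add: s_def q_def)
  from strongly_convex_L_smooth_gradient_step_radius[OF mu_pos sc sm xstar_min xstar_r this xR[unfolded R_def]]
  have step_inv_L: "(norm (x - (1 / L) *\<^sub>R grad x))\<^sup>2 + (1 / L)\<^sup>2 * \<sigma>\<^sup>2 \<le> R\<^sup>2"
    by (simp add: R_def power_divide)
  have "(norm x)\<^sup>2 \<le> R\<^sup>2"
    using xR by (intro power_mono) simp_all
  from sq_norm_step_le_endpoints[OF zero_le_power2 less_imp_le[OF eta(1)] eta(2) this step_inv_L]
  have "(norm (x - \<eta> *\<^sub>R grad x))\<^sup>2 + \<eta>\<^sup>2 * \<sigma>\<^sup>2 \<le> R\<^sup>2" .
  moreover have "\<eta>\<^sup>2 * (\<integral>\<omega>. (norm (g \<omega> - grad x))\<^sup>2 \<partial>M) \<le> \<eta>\<^sup>2 * \<sigma>\<^sup>2"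
    using var_bd by (rule mult_left_mono) simp
  ultimately show ?thesis
    using expectation_sq_norm_step[OF M g_int unbiased var_int, of x \<eta>]
    by (simp add: R_def s_def q_def)
qed

end
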